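(* Let $2\le m\le n$ and let $G=P_m\times P_n$ be the rectangular grid with vertex set $\{1,\dots,m\}\times\{1,\dots,n\}$, two vertices being adjacent iff they differ by $1$ in exactly one coordinate. Then the boundary cycle of $G$ (the cycle through all vertices with $i\in\{1,m\}$ or $j\in\{1,n\}$) is an $(m-1)$-supported cycle in $G$.
   Context: A cycle $C$ in a graph $G$ is $k$-supported if it can be partitioned into three edge-disjoint paths $I_1,I_2,I_3$, with $I_1\cap I_2$, $I_2\cap I_3$, $I_3\cap I_1$ each a single vertex, such that for all vertices $u_i\in V(I_i)$ ($i=1,2,3$), $\max_{i,j\in\{1,2,3\}} d_G(u_i,u_j)\ge k$, where $d_G$ is the graph distance. *)

theory Defs
  imports Main
begin

definition is_walk :: "'a set \<Rightarrow> ('a \<Rightarrow> 'a \<Rightarrow> bool) \<Rightarrow> 'a list \<Rightarrow> bool" where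
  "is_walk V E p \<longleftrightarrow> p \<noteq> [] \<and> set p \<subseteq> V \<and> (\<forall>i. Suc i < length p \<longrightarrow> E (p ! i) (p ! Suc i))"

definition is_path :: "'a set \<Rightarrow> ('a \<Rightarrow> 'a \<Rightarrow> bool) \<Rightarrow> 'a list \<Rightarrow> bool" where
  "is_path V E p \<longleftrightarrow> is_walk V E p \<and> distinct p"

definition gdist :: "'a set \<Rightarrow> ('a \<Rightarrow> 'a \<Rightarrow> bool) \<Rightarrow> 'a \<Rightarrow> 'a \<Rightarrow> nat" where
  "gdist V E u v = (LEAST k. \<exists>p. is_walk V E p \<and> hd p = u \<and> last p = v \<and> length p = Suc k)"

definition path_edges :: "'a list \<Rightarrow> 'a set set" where
  "path_edges p = {{p ! i, p ! Suc i} | i. Suc i < length p}"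

text \<open>A cycle is given by its cyclic vertex sequence (closing edge from the last to the first vertex).\<close>
definition is_cycle :: "'a set \<Rightarrow> ('a \<Rightarrow> 'a \<Rightarrow> bool) \<Rightarrow> 'a list \<Rightarrow> bool" where
  "is_cycle V E C \<longleftrightarrow> length C \<ge> 3 \<and> is_path V E C \<and> E (last C) (hd C)"

definition cycle_edges :: "'a list \<Rightarrow> 'a set set" where
  "cycle_edges C = {{C ! i, C ! ((Suc i) mod length C)} | i. i < length C}"

definition k_supported :: "'a set \<Rightarrow> ('a \<Rightarrow> 'a \<Rightarrow> bool) \<Rightarrow> nat \<Rightarrow> 'a list \<Rightarrow> bool" where
  "k_supported V E k C \<longleftrightarrow> is_cycle V E C \<and>
     (\<exists>I1 I2 I3. is_path V E I1 \<and> is_path V E I2 \<and> is_path V E I3 \<and>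
        path_edges I1 \<union> path_edges I2 \<union> path_edges I3 = cycle_edges C \<and>
        path_edges I1 \<inter> path_edges I2 = {} \<and> path_edges I2 \<inter> path_edges I3 = {} \<and>
        path_edges I3 \<inter> path_edges I1 = {} \<and>
        (\<exists>x. set I1 \<inter> set I2 = {x}) \<and> (\<exists>x. set I2 \<inter> set I3 = {x}) \<and>
        (\<exists>x. set I3 \<inter> set I1 = {x}) \<and>
        (\<forall>u1\<in>set I1. \<forall>u2\<in>set I2. \<forall>u3\<in>set I3.
           max (gdist V E u1 u2) (max (gdist V E u2 u3) (gdist V E u3 u1)) \<ge> k))"

definition grid_V :: "nat \<Rightarrow> nat \<Rightarrow> (nat \<times> nat) set" where
  "grid_V m n = {1..m} \<times> {1..n}"

definition grid_E :: "nat \<Rightarrow> nat \<Rightarrow> nat \<times> nat \<Rightarrow> nat \<times> nat \<Rightarrow> bool" where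
  "grid_E m n u v \<longleftrightarrow> u \<in> grid_V m n \<and> v \<in> grid_V m n \<and>
     ((fst u = fst v \<and> \<bar>int (snd u) - int (snd v)\<bar> = 1) \<or>
      (snd u = snd v \<and> \<bar>int (fst u) - int (fst v)\<bar> = 1))"

definition boundary_cycle :: "nat \<Rightarrow> nat \<Rightarrow> (nat \<times> nat) list" where
  "boundary_cycle m n =
     map (\<lambda>j. (1, j)) [1..<n+1] @ map (\<lambda>i. (i, n)) [2..<m+1] @
     map (\<lambda>j. (m, j)) (rev [1..<n]) @ map (\<lambda>i. (i, 1)) (rev [2..<m])"

end

theory Submission
  imports Defs
begin

text \<open>Split the boundary cycle into the top row \<open>I\<^sub>1\<close>, the right column followed by the bottom
  row \<open>I\<^sub>2\<close>, and the left column \<open>I\<^sub>3\<close>. Every vertex of \<open>I\<^sub>2\<close> lies in row \<open>m\<close> or in column \<open>n\<close>.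
  In the first case it has row distance \<open>m - 1\<close> from every vertex of \<open>I\<^sub>1\<close>, in the second
  case column distance \<open>n - 1 \<ge> m - 1\<close> from every vertex of \<open>I\<^sub>3\<close>. A row or column coordinate
  changes by at most one along each grid edge, so these coordinate differences are lower
  bounds for the graph distance.\<close>

lemma is_walk_iff_successively:
  "is_walk V E p \<longleftrightarrow> p \<noteq> [] \<and> set p \<subseteq> V \<and> successively E p"
  by (simp add: is_walk_def successively_conv_nth)

lemma path_edges_Nil [simp]: "path_edges [] = {}"
  and path_edges_singleton [simp]: "path_edges [x] = {}"
  by (auto simp: path_edges_def)

lemma path_edges_Cons_Cons [simp]:
  "path_edges (x # y # xs) = insert {x, y} (path_edges (y # xs))"
proof (intro set_eqI iffI)
  fix e assume "e \<in> path_edges (x # y # xs)"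
  then obtain i where "e = {(x # y # xs) ! i, (x # y # xs) ! Suc i}" "Suc i < length (x # y # xs)"
    by (auto simp: path_edges_def)
  then show "e \<in> insert {x, y} (path_edges (y # xs))"
    by (cases i) (auto simp: path_edges_def)
next
  fix e assume "e \<in> insert {x, y} (path_edges (y # xs))"
  then show "e \<in> path_edges (x # y # xs)"
    unfolding path_edges_def by (auto intro: exI[of _ 0] exI[of _ "Suc i" for i])
qed

lemma path_edges_Cons:
  "path_edges (x # xs) = (if xs = [] then {} else insert {x, hd xs} (path_edges xs))"
  by (cases xs) auto

lemma path_edges_append:
  "path_edges (xs @ ys) = path_edges xs \<union> path_edges ys \<union>
     (if xs = [] \<or> ys = [] then {} else {{last xs, hd ys}})"
  by (induction xs) (auto simp: path_edges_Cons)

lemma cycle_edges_eq_insert_path_edges: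
  assumes "C \<noteq> []"
  shows "cycle_edges C = insert {last C, hd C} (path_edges C)"
proof -
  have ends: "last C = C ! (length C - 1)" "hd C = C ! 0"
    using assms by (auto simp: last_conv_nth hd_conv_nth)
  show ?thesis
  proof (intro set_eqI iffI)
    fix e assume "e \<in> cycle_edges C"
    then obtain i where e: "e = {C ! i, C ! (Suc i mod length C)}" "i < length C"
      by (auto simp: cycle_edges_def)
    show "e \<in> insert {last C, hd C} (path_edges C)"
    proof (cases "Suc i < length C")
      case True
      then show ?thesis using e by (auto simp: path_edges_def)
    next
      case False
      then have "Suc i = length C" using e(2) by simp
      then have "i = length C - 1" "Suc i mod length C = 0" by simp_all
      then show ?thesis using e(1) ends by simp
    qed
  next
    fix e assume "e \<in> insert {last C, hd C} (path_edges C)"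
    then show "e \<in> cycle_edges C"
      unfolding cycle_edges_def path_edges_def using ends assms
      by (auto intro: exI[of _ "length C - 1"] exI[of _ "i" for i])
  qed
qed

lemma cycle_edges_split3:
  assumes "A \<noteq> []" "B \<noteq> []" "C \<noteq> []"
  shows "cycle_edges (A @ B @ C @ D) =
    path_edges A \<union> path_edges (last A # B @ C) \<union> path_edges (last C # D @ [hd A])"
  using assms
  by (cases "D = []")
     (simp_all add: cycle_edges_eq_insert_path_edges path_edges_append path_edges_Cons
        insert_commute Un_ac)

lemma walk_path_edge_endpoints:
  assumes "is_walk V E p" "\<And>x. \<not> E x x" "e \<in> path_edges p"
  shows "\<exists>u v. e = {u, v} \<and> u \<noteq> v \<and> u \<in> set p \<and> v \<in> set p"
proof -
  obtain i where e: "e = {p ! i, p ! Suc i}" "Suc i < length p"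
    using assms(3) by (auto simp: path_edges_def)
  have "E (p ! i) (p ! Suc i)" using assms(1) e(2) unfolding is_walk_def by blast
  then have "p ! i \<noteq> p ! Suc i" using assms(2) by metis
  moreover have "p ! i \<in> set p" "p ! Suc i \<in> set p" using e(2) by simp_all
  ultimately show ?thesis using e(1) by blast
qed

lemma path_edges_disjoint_if_meet_singleton:
  assumes "is_walk V E p" "is_walk V E q" "\<And>x. \<not> E x x" "set p \<inter> set q = {x}"
  shows "path_edges p \<inter> path_edges q = {}"
proof (rule ccontr)
  assume "path_edges p \<inter> path_edges q \<noteq> {}"
  then obtain e where e: "e \<in> path_edges p" "e \<in> path_edges q" by blast
  obtain u v where "e = {u, v}" "u \<noteq> v" "u \<in> set p" "v \<in> set p"
    using walk_path_edge_endpoints[OF assms(1,3) e(1)] by blast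
  moreover have "e \<subseteq> set q" using walk_path_edge_endpoints[OF assms(2,3) e(2)] by blast
  ultimately show False using assms(4) by auto
qed

lemma walk_Lipschitz_bound:
  fixes f :: "'a \<Rightarrow> int"
  assumes "is_walk V E p" "\<And>x y. E x y \<Longrightarrow> \<bar>f x - f y\<bar> \<le> 1"
  shows "\<bar>f (hd p) - f (last p)\<bar> \<le> int (length p) - 1"
  using assms(1)
proof (induction p)
  case Nil
  then show ?case by (simp add: is_walk_def)
next
  case (Cons x xs)
  show ?case
  proof (cases "xs = []")
    case True
    then show ?thesis by simp
  next
    case False
    then have "is_walk V E xs" "E x (hd xs)"
      using Cons.prems by (auto simp: is_walk_iff_successively successively_Cons)
    with Cons.IH assms(2)[of x "hd xs"] False show ?thesis by auto
  qed
qed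

lemma gdist_ge_Lipschitz:
  fixes f :: "'a \<Rightarrow> int"
  assumes "\<exists>p. is_walk V E p \<and> hd p = u \<and> last p = v"
    and "\<And>x y. E x y \<Longrightarrow> \<bar>f x - f y\<bar> \<le> 1"
  shows "nat \<bar>f u - f v\<bar> \<le> gdist V E u v"
proof -
  have "\<exists>k p. is_walk V E p \<and> hd p = u \<and> last p = v \<and> length p = Suc k"
    using assms(1) by (metis is_walk_def length_greater_0_conv Suc_pred)
  from LeastI_ex[OF this] obtain p where p: "is_walk V E p" "hd p = u" "last p = v"
      "length p = Suc (gdist V E u v)"
    unfolding gdist_def by blast
  have "\<bar>f (hd p) - f (last p)\<bar> \<le> int (length p) - 1"
    using p(1) assms(2) by (rule walk_Lipschitz_bound)
  with p(2-4) show ?thesis by simp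
qed

lemma successively_upt_intro:
  "(\<And>i. a \<le> i \<Longrightarrow> Suc i < b \<Longrightarrow> P i (Suc i)) \<Longrightarrow> successively P [a..<b]"
  by (auto simp: successively_conv_nth)

lemma is_walk_glue:
  assumes "is_walk V E p" "is_walk V E q" "last p = hd q"
  shows "is_walk V E (p @ tl q)"
  using assms by (cases q) (auto simp: is_walk_iff_successively successively_append_iff
      successively_Cons)

lemma is_walk_snocD:
  assumes "is_walk V E (C @ [x])" "C \<noteq> []"
  shows "is_walk V E C" "E (last C) x"
  using assms by (auto simp: is_walk_iff_successively successively_append_iff)

lemma grid_E_irrefl: "\<not> grid_E m n x x"
  by (simp add: grid_E_def)

lemma grid_E_fst_Lipschitz: "grid_E m n u v \<Longrightarrow> \<bar>int (fst u) - int (fst v)\<bar> \<le> 1"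
  and grid_E_snd_Lipschitz: "grid_E m n u v \<Longrightarrow> \<bar>int (snd u) - int (snd v)\<bar> \<le> 1"
  by (auto simp: grid_E_def)

definition manhattan :: "nat \<times> nat \<Rightarrow> nat \<times> nat \<Rightarrow> nat" where
  "manhattan u v = nat \<bar>int (fst u) - int (fst v)\<bar> + nat \<bar>int (snd u) - int (snd v)\<bar>"

lemma grid_step_towards:
  assumes "u \<in> grid_V m n" "v \<in> grid_V m n" "u \<noteq> v"
  shows "\<exists>w. grid_E m n u w \<and> manhattan w v < manhattan u v"
proof -
  obtain a b c d where u: "u = (a, b)" and v: "v = (c, d)" by (cases u, cases v)
  have box: "1 \<le> a" "a \<le> m" "1 \<le> b" "b \<le> n" "1 \<le> c" "c \<le> m" "1 \<le> d" "d \<le> n"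
    using assms(1,2) u v by (auto simp: grid_V_def)
  consider "a < c" | "c < a" | "a = c" "b < d" | "a = c" "d < b"
    using assms(3) u v by (metis linorder_neqE_nat)
  then show ?thesis
  proof cases
    case 1
    then show ?thesis using box u v
      by (intro exI[of _ "(Suc a, b)"]) (auto simp: grid_E_def grid_V_def manhattan_def)
  next
    case 2
    then show ?thesis using box u v
      by (intro exI[of _ "(a - 1, b)"]) (auto simp: grid_E_def grid_V_def manhattan_def)
  next
    case 3
    then show ?thesis using box u v
      by (intro exI[of _ "(a, Suc b)"]) (auto simp: grid_E_def grid_V_def manhattan_def)
  next
    case 4
    then show ?thesis using box u v
      by (intro exI[of _ "(a, b - 1)"]) (auto simp: grid_E_def grid_V_def manhattan_def)
  qed
qed

lemma grid_walk_exists: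
  assumes "u \<in> grid_V m n" "v \<in> grid_V m n"
  shows "\<exists>p. is_walk (grid_V m n) (grid_E m n) p \<and> hd p = u \<and> last p = v"
  using assms(1)
proof (induction "manhattan u v" arbitrary: u rule: less_induct)
  case less
  show ?case
  proof (cases "u = v")
    case True
    then show ?thesis using less.prems by (intro exI[of _ "[v]"]) (simp add: is_walk_def)
  next
    case False
    then obtain w where w: "grid_E m n u w" "manhattan w v < manhattan u v"
      using grid_step_towards[OF less.prems assms(2)] by blast
    then have "w \<in> grid_V m n" by (simp add: grid_E_def)
    with less.hyps w(2) obtain p where p: "is_walk (grid_V m n) (grid_E m n) p" "hd p = w" "last p = v"
      by blast
    then have "is_walk (grid_V m n) (grid_E m n) (u # p)"
      using w(1) less.prems by (auto simp: is_walk_iff_successively successively_Cons)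
    with p show ?thesis by (intro exI[of _ "u # p"]) (auto simp: is_walk_def)
  qed
qed

lemma grid_gdist_ge_fst_diff:
  assumes "u \<in> grid_V m n" "v \<in> grid_V m n"
  shows "nat \<bar>int (fst u) - int (fst v)\<bar> \<le> gdist (grid_V m n) (grid_E m n) u v"
  using grid_walk_exists[OF assms] grid_E_fst_Lipschitz by (rule gdist_ge_Lipschitz)

lemma grid_gdist_ge_snd_diff:
  assumes "u \<in> grid_V m n" "v \<in> grid_V m n"
  shows "nat \<bar>int (snd u) - int (snd v)\<bar> \<le> gdist (grid_V m n) (grid_E m n) u v"
  using grid_walk_exists[OF assms] grid_E_snd_Lipschitz by (rule gdist_ge_Lipschitz)

definition top_side :: "nat \<Rightarrow> (nat \<times> nat) list" where
  "top_side n = map (\<lambda>j. (1, j)) [1..<Suc n]"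

definition right_bottom_side :: "nat \<Rightarrow> nat \<Rightarrow> (nat \<times> nat) list" where
  "right_bottom_side m n = map (\<lambda>i. (i, n)) [1..<Suc m] @ map (\<lambda>j. (m, j)) (rev [1..<n])"

definition left_side :: "nat \<Rightarrow> (nat \<times> nat) list" where
  "left_side m = map (\<lambda>i. (i, 1)) (rev [1..<Suc m])"

lemma set_top_side: "set (top_side n) = {1} \<times> {1..n}"
  by (auto simp: top_side_def)

lemma set_right_bottom_side: "set (right_bottom_side m n) = {1..m} \<times> {n} \<union> {m} \<times> {1..<n}"
  by (auto simp: right_bottom_side_def)

lemma set_left_side: "set (left_side m) = {1..m} \<times> {1}"
  by (auto simp: left_side_def)

lemma top_side_is_path:
  assumes "1 \<le> m" "1 \<le> n"
  shows "is_path (grid_V m n) (grid_E m n) (top_side n)"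
proof -
  have "successively (grid_E m n) (top_side n)"
    unfolding top_side_def successively_map
    using assms by (intro successively_upt_intro) (auto simp: grid_E_def grid_V_def)
  then show ?thesis
    using assms by (auto simp: is_path_def is_walk_iff_successively top_side_def grid_V_def
        distinct_map inj_on_def simp del: upt_Suc)
qed

lemma left_side_is_path:
  assumes "1 \<le> m" "1 \<le> n"
  shows "is_path (grid_V m n) (grid_E m n) (left_side m)"
proof -
  have "successively (grid_E m n) (left_side m)"
    unfolding left_side_def successively_map successively_rev
    using assms by (intro successively_upt_intro) (auto simp: grid_E_def grid_V_def)
  then show ?thesis
    using assms by (auto simp: is_path_def is_walk_iff_successively left_side_def grid_V_def
        distinct_map inj_on_def simp del: upt_Suc)
qed

lemma right_bottom_side_is_path:
  assumes "1 \<le> m" "2 \<le> n"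
  shows "is_path (grid_V m n) (grid_E m n) (right_bottom_side m n)"
proof -
  have "successively (grid_E m n) (map (\<lambda>i. (i, n)) [1..<Suc m])"
    unfolding successively_map
    using assms by (intro successively_upt_intro) (auto simp: grid_E_def grid_V_def)
  moreover have "successively (grid_E m n) (map (\<lambda>j. (m, j)) (rev [1..<n]))"
    unfolding successively_map successively_rev
    using assms by (intro successively_upt_intro) (auto simp: grid_E_def grid_V_def)
  moreover have "grid_E m n (m, n) (m, n - 1)"
    using assms by (auto simp: grid_E_def grid_V_def)
  ultimately have "successively (grid_E m n) (right_bottom_side m n)"
    using assms by (simp add: right_bottom_side_def successively_append_iff last_map hd_map
        hd_rev del: upt_Suc)
  moreover have "distinct (right_bottom_side m n)"
    by (auto simp: right_bottom_side_def distinct_map inj_on_def simp del: upt_Suc)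
  ultimately show ?thesis
    using assms by (auto simp: is_path_def is_walk_iff_successively right_bottom_side_def
        grid_V_def)
qed

lemma hd_top_side: "1 \<le> n \<Longrightarrow> hd (top_side n) = (1, 1)"
  and last_top_side: "1 \<le> n \<Longrightarrow> last (top_side n) = (1, n)"
  by (simp_all add: top_side_def hd_map last_map del: upt_Suc)

lemma right_bottom_side_eq_Cons:
  "1 \<le> m \<Longrightarrow> right_bottom_side m n =
    (1, n) # map (\<lambda>i. (i, n)) [2..<Suc m] @ map (\<lambda>j. (m, j)) (rev [1..<n])"
  unfolding right_bottom_side_def by (subst upt_conv_Cons) (simp_all add: numeral_2_eq_2)

lemma left_side_eq_Cons:
  assumes "2 \<le> m"
  shows "left_side m = (m, 1) # map (\<lambda>i. (i, 1)) (rev [2..<m]) @ [(1, 1)]"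
proof -
  have "[1..<m] = 1 # [2..<m]"
    using assms by (subst upt_conv_Cons) (simp_all add: numeral_2_eq_2)
  then show ?thesis using assms by (simp add: left_side_def)
qed

lemma boundary_cycle_is_cycle:
  assumes "2 \<le> m" "2 \<le> n"
  shows "is_cycle (grid_V m n) (grid_E m n) (boundary_cycle m n)"
proof -
  let ?V = "grid_V m n" and ?E = "grid_E m n"
  have closed: "boundary_cycle m n @ [(1, 1)] =
      top_side n @ tl (right_bottom_side m n @ tl (left_side m))"
    using assms by (simp add: boundary_cycle_def top_side_def right_bottom_side_eq_Cons
        left_side_eq_Cons)
  have walks: "is_walk ?V ?E (top_side n)" "is_walk ?V ?E (right_bottom_side m n)"
      "is_walk ?V ?E (left_side m)"
    using assms top_side_is_path[of m n] right_bottom_side_is_path[of m n]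
      left_side_is_path[of m n]
    by (simp_all add: is_path_def)
  have glue_rb: "last (right_bottom_side m n) = hd (left_side m)"
    using assms by (simp add: right_bottom_side_def left_side_eq_Cons last_map last_rev hd_upt)
  have glue_top: "last (top_side n) = hd (right_bottom_side m n @ tl (left_side m))"
    using assms by (simp add: last_top_side[of n] right_bottom_side_eq_Cons[of m])
  have "is_walk ?V ?E (boundary_cycle m n @ [(1, 1)])"
    unfolding closed using walks(1) is_walk_glue[OF walks(2,3) glue_rb] glue_top
    by (rule is_walk_glue)
  moreover have "boundary_cycle m n \<noteq> []" using assms by (simp add: boundary_cycle_def)
  ultimately have "is_walk ?V ?E (boundary_cycle m n)" "?E (last (boundary_cycle m n)) (1, 1)"
    by (blast dest: is_walk_snocD)+
  moreover have "distinct (boundary_cycle m n)"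
    using assms by (auto simp: boundary_cycle_def distinct_map inj_on_def)
  moreover have "hd (boundary_cycle m n) = (1, 1)" "length (boundary_cycle m n) \<ge> 3"
    using assms by (auto simp: boundary_cycle_def hd_map)
  ultimately show ?thesis by (simp add: is_cycle_def is_path_def)
qed

lemma cycle_edges_boundary_cycle:
  assumes "2 \<le> m" "2 \<le> n"
  shows "cycle_edges (boundary_cycle m n) =
    path_edges (top_side n) \<union> path_edges (right_bottom_side m n) \<union> path_edges (left_side m)"
proof -
  define B where "B = map (\<lambda>i. (i, n)) [2..<Suc m]"
  define C where "C = map (\<lambda>j. (m, j)) (rev [1..<n])"
  define D where "D = map (\<lambda>i. (i, 1::nat)) (rev [2..<m])"
  have "boundary_cycle m n = top_side n @ B @ C @ D"
    by (simp add: boundary_cycle_def top_side_def B_def C_def D_def)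
  moreover have "right_bottom_side m n = last (top_side n) # B @ C"
    using assms by (simp add: right_bottom_side_eq_Cons last_top_side B_def C_def)
  moreover have "left_side m = last C # D @ [hd (top_side n)]"
    using assms by (simp add: left_side_eq_Cons hd_top_side C_def D_def last_map last_rev)
  moreover have "top_side n \<noteq> []" "B \<noteq> []" "C \<noteq> []"
    using assms by (auto simp: top_side_def B_def C_def)
  ultimately show ?thesis by (simp add: cycle_edges_split3)
qed

lemma boundary_sides_meet:
  assumes "2 \<le> m" "2 \<le> n"
  shows "set (top_side n) \<inter> set (right_bottom_side m n) = {(1, n)}"
    and "set (right_bottom_side m n) \<inter> set (left_side m) = {(m, 1)}"
    and "set (left_side m) \<inter> set (top_side n) = {(1, 1)}"
  using assms by (auto simp: set_top_side set_right_bottom_side set_left_side)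

lemma boundary_sides_far_apart:
  assumes "2 \<le> m" "m \<le> n"
    and u: "u1 \<in> set (top_side n)" "u2 \<in> set (right_bottom_side m n)" "u3 \<in> set (left_side m)"
  shows "m - 1 \<le> max (gdist (grid_V m n) (grid_E m n) u1 u2)
    (max (gdist (grid_V m n) (grid_E m n) u2 u3) (gdist (grid_V m n) (grid_E m n) u3 u1))"
proof -
  have V: "u1 \<in> grid_V m n" "u2 \<in> grid_V m n" "u3 \<in> grid_V m n"
    using u assms by (auto simp: set_top_side set_right_bottom_side set_left_side grid_V_def)
  consider "fst u2 = m" | "snd u2 = n"
    using u(2) by (auto simp: set_right_bottom_side)
  then show ?thesis
  proof cases
    case 1
    then have "m - 1 \<le> nat \<bar>int (fst u1) - int (fst u2)\<bar>"
      using u(1) by (auto simp: set_top_side)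
    with grid_gdist_ge_fst_diff[OF V(1,2)] show ?thesis by linarith
  next
    case 2
    then have "m - 1 \<le> nat \<bar>int (snd u2) - int (snd u3)\<bar>"
      using u(3) assms by (auto simp: set_left_side)
    with grid_gdist_ge_snd_diff[OF V(2,3)] show ?thesis by linarith
  qed
qed

theorem mainTheorem5:
  fixes m n :: nat
  assumes "2 \<le> m" and "m \<le> n"
  shows "k_supported (grid_V m n) (grid_E m n) (m - 1) (boundary_cycle m n)"
proof -
  have "2 \<le> n" using assms by simp
  note sides_meet = boundary_sides_meet[OF assms(1) this]
  have paths: "is_path (grid_V m n) (grid_E m n) (top_side n)"
      "is_path (grid_V m n) (grid_E m n) (right_bottom_side m n)"
      "is_path (grid_V m n) (grid_E m n) (left_side m)"
    using assms top_side_is_path right_bottom_side_is_path left_side_is_path by simp_all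
  then have walks: "is_walk (grid_V m n) (grid_E m n) (top_side n)"
      "is_walk (grid_V m n) (grid_E m n) (right_bottom_side m n)"
      "is_walk (grid_V m n) (grid_E m n) (left_side m)"
    by (simp_all add: is_path_def)
  note edges_disjoint =
    path_edges_disjoint_if_meet_singleton[OF walks(1,2) grid_E_irrefl sides_meet(1)]
    path_edges_disjoint_if_meet_singleton[OF walks(2,3) grid_E_irrefl sides_meet(2)]
    path_edges_disjoint_if_meet_singleton[OF walks(3,1) grid_E_irrefl sides_meet(3)]
  show ?thesis
    unfolding k_supported_def
    using boundary_cycle_is_cycle[OF assms(1) \<open>2 \<le> n\<close>] paths
      cycle_edges_boundary_cycle[OF assms(1) \<open>2 \<le> n\<close>, symmetric] edges_disjoint sides_meet
      boundary_sides_far_apart[OF assms]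
    by blast
qed

end
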